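(* Let $X$ be a $2$-dimensional regular polyhedral Banach space with $2n$ extreme points ($n\ge2$), and let $x\in\operatorname{Ext}B_X$. Then $$\operatorname{diam}J(x)=\mathcal{E}(X)=\begin{cases}2\tan\frac{\pi}{2n}&\text{if } n \text{ is even},\\[2pt] 2\tan\frac{\pi}{2n}\,\sin\frac{(n-1)\pi}{2n}&\text{if } n\text{ is odd}.\end{cases}$$
   Context: A $2$-dimensional regular polyhedral Banach space with $2n$ extreme points is $\mathbb{R}^2$ equipped with the norm whose closed unit ball $B_X$ is a (centrally symmetric, centered at the origin) polygon with $2n$ vertices, all of whose edges have the same Euclidean length and all of whose interior angles are equal. $\operatorname{Ext}B_X$ is the set of extreme points (vertices) of $B_X$. For $x\neq\theta$, $J(x)=\{f\in S_{X^*}:f(x)=\|x\|\}$, $\operatorname{diam}J(x)=\sup_{f,g\in J(x)}\|f-g\|$ (dual norm), and $\mathcal{E}(X)=\sup\{\operatorname{diam}J(x):x\in S_X\}$. *)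

theory Defs
  imports "HOL-Analysis.Analysis"
begin

definition poly_vertex :: "nat \<Rightarrow> real \<Rightarrow> real \<Rightarrow> nat \<Rightarrow> real^2" where
  "poly_vertex n r th k = vector [r * cos (th + real k * pi / real n), r * sin (th + real k * pi / real n)]"

text \<open>Closed unit ball of the 2-dimensional regular polyhedral space: the convex hull
  of the 2n vertices.\<close>
definition reg_ball :: "nat \<Rightarrow> real \<Rightarrow> real \<Rightarrow> (real^2) set" where
  "reg_ball n r th = convex hull {poly_vertex n r th k | k. k < 2 * n}"

text \<open>The norm whose closed unit ball is B (Minkowski functional).\<close>
definition bnorm :: "(real^2) set \<Rightarrow> real^2 \<Rightarrow> real" where
  "bnorm B x = Inf {t. 0 < t \<and> x \<in> (\<lambda>y. t *\<^sub>R y) ` B}"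

definition dnorm :: "(real^2) set \<Rightarrow> (real^2 \<Rightarrow> real) \<Rightarrow> real" where
  "dnorm B f = Sup {\<bar>f x\<bar> | x. bnorm B x \<le> 1}"

definition Jset :: "(real^2) set \<Rightarrow> real^2 \<Rightarrow> (real^2 \<Rightarrow> real) set" where
  "Jset B x = {f. linear f \<and> dnorm B f = 1 \<and> f x = bnorm B x}"

definition diamJ :: "(real^2) set \<Rightarrow> real^2 \<Rightarrow> real" where
  "diamJ B x = Sup {dnorm B (\<lambda>y. f y - g y) | f g. f \<in> Jset B x \<and> g \<in> Jset B x}"

definition calE :: "(real^2) set \<Rightarrow> real" where
  "calE B = Sup {diamJ B x | x. bnorm B x = 1}"

end

(*
  Index the vertices of B_X by integers, V_K = r (cos phi_K, sin phi_K) with phi_K = th + K pi/n,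
  and let W_K be V_K turned by pi/2; every linear f satisfies
  f V_J = cos ((J - K) pi/n) f V_K + sin ((J - K) pi/n) f W_K.
  On the cone spanned by two adjacent vertices the norm of a V_K + b V_(K+1) is a + b, so the
  dual norm of f is max_J |f V_J|. A functional norming V_K is thus fixed by its slope f W_K,
  and the constraints f V_(K-1), f V_(K+1) <= 1 confine the slope to [-tan (pi/2n), tan (pi/2n)],
  both ends being attained. Two norming functionals of V_K differ at V_J by sin ((J - K) pi/n)
  times the difference of their slopes, whence diam J(V_K) = 2 tan (pi/2n) max_m |sin (m pi/n)|;
  the maximum is 1 for even n and cos (pi/2n) = sin ((n - 1) pi/2n) for odd n.
  For y on the unit sphere, J(y) is contained in J(V_K) for any vertex V_K carrying positive
  weight in y, so no point beats a vertex; and the extreme points of B_X are its vertices.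
*)

theory Submission
  imports Defs
begin

section \<open>Trigonometric bounds\<close>

lemma abs_cos_odd_multiple_le:
  fixes n :: nat and q :: int
  assumes "1 \<le> n" and "odd q"
  shows "\<bar>cos (of_int q * (pi / (2 * real n)))\<bar> \<le> cos (pi / (2 * real n))"
proof -
  define a where "a = pi / (2 * real n)"
  define p where "p = q mod (2 * int n)"
  define k where "k = q div (2 * int n)"
  have a_pos: "0 < a" and half_turn: "2 * real n * a = pi"
    using assms(1) by (auto simp: a_def)
  have q_split: "q = p + 2 * (int n * k)"
    by (metis p_def k_def mod_mult_div_eq mult.assoc)
  have "odd p"
    using assms(2) q_split by simp
  moreover have "0 \<le> p" "p < 2 * int n"
    using assms(1) by (simp_all add: p_def)
  moreover have "p \<noteq> 0"
    using \<open>odd p\<close> by auto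
  ultimately have p_bounds: "1 \<le> p" "p \<le> 2 * int n - 1"
    by linarith+
  have "of_int q * a = of_int p * a + pi * of_int k"
    using half_turn by (subst q_split) (simp add: algebra_simps)
  hence "\<bar>cos (of_int q * a)\<bar> = \<bar>cos (of_int p * a)\<bar>"
    by (simp add: cos_add)
  moreover have p_angle: "a \<le> of_int p * a" "of_int p * a \<le> pi - a"
  proof -
    show "a \<le> of_int p * a"
      using p_bounds a_pos by simp
    have "of_int p * a \<le> (2 * real n - 1) * a"
      using p_bounds a_pos by (intro mult_right_mono) linarith+
    thus "of_int p * a \<le> pi - a"
      using half_turn by (simp add: algebra_simps)
  qed
  have "cos (of_int p * a) \<le> cos a" "cos (pi - a) \<le> cos (of_int p * a)"
    by (rule cos_monotone_0_pi_le; use p_angle a_pos in linarith)+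
  ultimately show ?thesis
    by (simp add: a_def[symmetric] abs_le_iff)
qed

lemma abs_sin_multiple_le_odd:
  fixes n :: nat and m :: int
  assumes "odd n"
  shows "\<bar>sin (of_int m * (pi / real n))\<bar> \<le> cos (pi / (2 * real n))"
proof -
  have "n \<ge> 1"
    using assms by (cases n) auto
  hence "sin (of_int m * (pi / real n)) = cos (of_int (int n - 2 * m) * (pi / (2 * real n)))"
    by (simp add: sin_cos_eq field_simps)
  moreover have "odd (int n - 2 * m)"
    using assms by simp
  ultimately show ?thesis
    using abs_cos_odd_multiple_le[OF \<open>n \<ge> 1\<close>] by metis
qed

definition max_abs_sin_multiple :: "nat \<Rightarrow> real" where
  "max_abs_sin_multiple n = (if even n then 1 else sin ((real n - 1) * pi / (2 * real n)))"

lemma abs_sin_multiple_le_max: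
  assumes "n \<ge> 1"
  shows "\<bar>sin (of_int m * (pi / real n))\<bar> \<le> max_abs_sin_multiple n"
proof -
  have "(real n - 1) * pi / (2 * real n) = pi / 2 - pi / (2 * real n)"
    using assms by (simp add: field_simps)
  hence "sin ((real n - 1) * pi / (2 * real n)) = cos (pi / (2 * real n))"
    by (simp add: sin_cos_eq)
  thus ?thesis
    using abs_sin_multiple_le_odd[of n m] by (simp add: max_abs_sin_multiple_def)
qed

lemma max_abs_sin_multiple_attained:
  assumes "n \<ge> 1"
  obtains m :: int where "\<bar>sin (of_int m * (pi / real n))\<bar> = max_abs_sin_multiple n"
proof (cases "even n")
  case True
  then obtain k where "n = 2 * k"
    by blast
  hence "sin (of_int (int k) * (pi / real n)) = 1"
    using assms by simp
  thus ?thesis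
    using that[of "int k"] True by (simp add: max_abs_sin_multiple_def)
next
  case False
  then obtain k where n: "n = 2 * k + 1"
    using oddE by blast
  hence angle: "of_int (int k) * (pi / real n) = (real n - 1) * pi / (2 * real n)"
    by (simp add: field_simps)
  have "0 \<le> sin ((real n - 1) * pi / (2 * real n))"
    using assms by (intro sin_ge_zero) (auto simp: field_simps)
  thus ?thesis
    using that[of "int k"] False unfolding angle max_abs_sin_multiple_def by simp
qed

lemma cos_add_tan_mult_sin:
  assumes "cos a \<noteq> 0"
  shows "cos x + tan a * sin x = cos (x - a) / cos a"
  using assms by (simp add: cos_diff tan_def field_simps)

section \<open>Polar coordinates in the plane\<close>

definition polar :: "real \<Rightarrow> real \<Rightarrow> real^2" where
  "polar \<rho> \<psi> = vector [\<rho> * cos \<psi>, \<rho> * sin \<psi>]"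

lemma inner_polar: "polar \<rho> \<psi> \<bullet> polar \<sigma> \<phi> = \<rho> * \<sigma> * cos (\<psi> - \<phi>)"
  by (simp add: polar_def inner_vec_def sum_2 cos_diff algebra_simps)

lemma polar_add:
  "polar \<rho> (\<psi> + d) = cos d *\<^sub>R polar \<rho> \<psi> + sin d *\<^sub>R polar \<rho> (\<psi> + pi / 2)"
  by (simp add: polar_def vec_eq_iff forall_2 cos_add sin_add algebra_simps)

lemma polar_add_pi: "polar \<rho> (\<psi> + pi) = - polar \<rho> \<psi>"
  by (simp add: polar_def vec_eq_iff forall_2)

lemma polar_add_int_2pi: "polar \<rho> (\<psi> + of_int k * (2 * pi)) = polar \<rho> \<psi>"
  by (simp add: polar_def cos_add sin_add mult.commute[of _ "2 * pi"])

lemma polar_surj: "\<exists>\<rho> \<psi>. 0 \<le> \<rho> \<and> y = polar \<rho> \<psi>"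
proof -
  define \<rho> where "\<rho> = sqrt ((y$1)\<^sup>2 + (y$2)\<^sup>2)"
  show ?thesis
  proof (cases "\<rho> = 0")
    case True
    hence "y = polar 0 0"
      by (simp add: \<rho>_def polar_def vec_eq_iff forall_2 add_nonneg_eq_0_iff)
    thus ?thesis
      by blast
  next
    case False
    have "(y$1 / \<rho>)\<^sup>2 + (y$2 / \<rho>)\<^sup>2 = 1"
      using False by (simp add: \<rho>_def power_divide add_divide_distrib[symmetric])
    then obtain \<psi> where "y$1 / \<rho> = cos \<psi>" "y$2 / \<rho> = sin \<psi>"
      using sincos_total_2pi by metis
    hence "y = polar \<rho> \<psi>"
      using False by (simp add: polar_def vec_eq_iff forall_2 field_simps)
    moreover have "0 \<le> \<rho>"
      by (simp add: \<rho>_def)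
    ultimately show ?thesis
      by blast
  qed
qed

lemma polar_in_sector:
  assumes "sin h \<noteq> 0" and "r \<noteq> 0"
  shows "polar \<rho> (p + d) =
    (\<rho> * sin (h - d) / (r * sin h)) *\<^sub>R polar r p + (\<rho> * sin d / (r * sin h)) *\<^sub>R polar r (p + h)"
proof -
  have "sin (h - d) * cos p + sin d * cos (p + h) = sin h * cos (p + d)"
    and "sin (h - d) * sin p + sin d * sin (p + h) = sin h * sin (p + d)"
    by (simp_all add: sin_diff cos_add sin_add algebra_simps)
  moreover have "\<rho> * sin (h - d) / (r * sin h) * (r * u) + \<rho> * sin d / (r * sin h) * (r * v)
      = \<rho> * (sin (h - d) * u + sin d * v) / sin h" for u v
    using assms by (simp add: field_simps)
  ultimately show ?thesis
    using assms(1) by (simp add: polar_def vec_eq_iff forall_2)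
qed

section \<open>Minkowski functional, dual norm and duality mapping\<close>

lemma linear_le_on_convex_hull:
  fixes g :: "'a::real_vector \<Rightarrow> real"
  assumes "linear g" and "\<forall>v\<in>S. g v \<le> M" and "z \<in> convex hull S"
  shows "g z \<le> M"
proof -
  have "convex hull S \<subseteq> g -` {..M}"
    using assms(2) by (intro hull_minimal convex_linear_vimage[OF assms(1)]) auto
  thus ?thesis
    using assms(3) by auto
qed

lemma bnorm_le:
  assumes "0 < t" and "y \<in> (\<lambda>z. t *\<^sub>R z) ` B"
  shows "bnorm B y \<le> t"
  unfolding bnorm_def by (rule cInf_lower) (use assms in \<open>auto intro: bdd_belowI[where m = 0]\<close>)

lemma linear_le_bnorm:
  assumes "linear g" and "\<forall>z\<in>B. g z \<le> 1" and "\<exists>t>0. y \<in> (\<lambda>z. t *\<^sub>R z) ` B"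
  shows "g y \<le> bnorm B y"
  unfolding bnorm_def
proof (rule cInf_greatest)
  fix t
  assume "t \<in> {t. 0 < t \<and> y \<in> (\<lambda>z. t *\<^sub>R z) ` B}"
  then obtain z where "0 < t" "z \<in> B" "y = t *\<^sub>R z"
    by auto
  thus "g y \<le> t"
    using assms(2) by (simp add: linear_cmul[OF assms(1)] mult_le_cancel_left1)
qed (use assms(3) in auto)

lemma abs_le_dnorm:
  assumes "\<forall>y. \<bar>f y\<bar> \<le> M * bnorm B y" and "0 \<le> M" and "bnorm B x \<le> 1"
  shows "\<bar>f x\<bar> \<le> dnorm B f"
  unfolding dnorm_def
proof (rule cSup_upper)
  show "bdd_above {\<bar>f x\<bar> |x. bnorm B x \<le> 1}"
    using assms(1,2) by (intro bdd_aboveI[where M = M]) (auto intro: order_trans mult_left_le)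
qed (use assms(3) in auto)

lemma dnorm_le:
  assumes "\<forall>y. \<bar>f y\<bar> \<le> M * bnorm B y" and "0 \<le> M" and "bnorm B x \<le> 1"
  shows "dnorm B f \<le> M"
  unfolding dnorm_def
proof (rule cSup_least)
  show "{\<bar>f x\<bar> |x. bnorm B x \<le> 1} \<noteq> {}"
    using assms(3) by auto
qed (use assms(1,2) in \<open>auto intro: order_trans mult_left_le\<close>)

lemma dnorm_eqI:
  assumes "\<forall>y. \<bar>f y\<bar> \<le> M * bnorm B y" and "bnorm B x = 1" and "\<bar>f x\<bar> = M"
  shows "dnorm B f = M"
proof (rule antisym)
  show "dnorm B f \<le> M"
    using assms by (intro dnorm_le[where x = x]) auto
  show "M \<le> dnorm B f"
    using abs_le_dnorm[of f M B x] assms by auto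
qed

lemma diamJ_le:
  assumes "Jset B x \<noteq> {}"
    and "\<forall>f\<in>Jset B x. \<forall>g\<in>Jset B x. dnorm B (\<lambda>y. f y - g y) \<le> D"
  shows "diamJ B x \<le> D"
  unfolding diamJ_def
proof (rule cSup_least)
  show "{dnorm B (\<lambda>y. f y - g y) |f g. f \<in> Jset B x \<and> g \<in> Jset B x} \<noteq> {}"
    using assms(1) by blast
qed (use assms(2) in auto)

lemma diamJ_eqI:
  assumes "\<forall>f\<in>Jset B x. \<forall>g\<in>Jset B x. dnorm B (\<lambda>y. f y - g y) \<le> D"
    and "f \<in> Jset B x" and "g \<in> Jset B x" and "dnorm B (\<lambda>y. f y - g y) = D"
  shows "diamJ B x = D"
  unfolding diamJ_def by (rule cSup_eq_maximum) (use assms in auto)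

section \<open>The regular 2n-gon\<close>

locale regular_polygon =
  fixes n :: nat and r th :: real
  assumes two_le_n: "2 \<le> n" and r_pos: "0 < r"
begin

abbreviation BX :: "(real^2) set" where
  "BX \<equiv> reg_ball n r th"

abbreviation half_angle :: real where
  "half_angle \<equiv> pi / (2 * real n)"

definition vertex :: "int \<Rightarrow> real^2" where
  "vertex K = polar r (th + of_int K * (pi / real n))"

definition tangent :: "int \<Rightarrow> real^2" where
  "tangent K = polar r (th + of_int K * (pi / real n) + pi / 2)"

lemma half_angle_bounds: "0 < half_angle" "half_angle < pi / 2"
  using two_le_n by (auto simp: field_simps)

lemma cos_half_angle_pos: "0 < cos half_angle"
  using half_angle_bounds by (intro cos_gt_zero) auto

lemma tan_half_angle_pos: "0 < tan half_angle"
  using half_angle_bounds by (intro tan_gt_zero) auto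

lemma vertex_expand:
  "vertex J = cos (of_int (J - K) * (pi / real n)) *\<^sub>R vertex K
    + sin (of_int (J - K) * (pi / real n)) *\<^sub>R tangent K"
proof -
  have "vertex J = polar r ((th + of_int K * (pi / real n)) + of_int (J - K) * (pi / real n))"
    unfolding vertex_def by (simp add: algebra_simps)
  thus ?thesis
    by (subst (asm) polar_add) (simp only: vertex_def tangent_def)
qed

lemma linear_vertex_expand:
  assumes "linear f"
  shows "f (vertex J) = cos (of_int (J - K) * (pi / real n)) * f (vertex K)
    + sin (of_int (J - K) * (pi / real n)) * f (tangent K)"
  by (subst vertex_expand[of J K]) (simp add: linear_add[OF assms] linear_cmul[OF assms])

lemma vertex_add_n: "vertex (K + int n) = - vertex K"
proof -
  have "th + of_int (K + int n) * (pi / real n) = (th + of_int K * (pi / real n)) + pi"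
    using two_le_n by (simp add: field_simps)
  thus ?thesis
    unfolding vertex_def by (simp only: polar_add_pi)
qed

lemma reg_ball_eq_hull: "BX = convex hull (range vertex)"
proof -
  have poly_vertex_eq: "poly_vertex n r th k = vertex (int k)" for k
    by (simp add: poly_vertex_def vertex_def polar_def)
  have "{poly_vertex n r th k | k. k < 2 * n} = range vertex"
  proof (intro equalityI subsetI)
    fix v
    assume "v \<in> range vertex"
    then obtain K where v: "v = vertex K"
      by blast
    define k where "k = nat (K mod (2 * int n))"
    have "th + of_int K * (pi / real n) = th + real k * pi / real n + of_int (K div (2 * int n)) * (2 * pi)"
      using two_le_n unfolding k_def
      by (subst mod_mult_div_eq[symmetric, of K "2 * int n"]) (simp add: field_simps del: mod_mult_div_eq)
    hence "v = poly_vertex n r th k"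
      unfolding v vertex_def poly_vertex_def by (simp only: polar_add_int_2pi) (simp add: polar_def)
    moreover have "k < 2 * n"
      using two_le_n by (simp add: k_def nat_less_iff)
    ultimately show "v \<in> {poly_vertex n r th k | k. k < 2 * n}"
      by blast
  qed (auto simp: poly_vertex_eq)
  thus ?thesis
    by (simp add: reg_ball_def)
qed

lemma convex_BX: "convex BX"
  by (simp add: reg_ball_eq_hull)

lemma vertex_in_BX: "vertex K \<in> BX"
  unfolding reg_ball_eq_hull by (rule hull_inc) simp

lemma zero_in_BX: "0 \<in> BX"
proof -
  have "(1 / 2) *\<^sub>R vertex 0 + (1 / 2) *\<^sub>R vertex (0 + int n) \<in> BX"
    by (rule convexD[OF convex_BX vertex_in_BX vertex_in_BX]) auto
  thus ?thesis
    by (simp only: vertex_add_n) simp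
qed

lemma cone_decomposition: "\<exists>K \<alpha> \<beta>. 0 \<le> \<alpha> \<and> 0 \<le> \<beta> \<and> y = \<alpha> *\<^sub>R vertex K + \<beta> *\<^sub>R vertex (K + 1)"
proof -
  obtain \<rho> \<psi> where "0 \<le> \<rho>" and y: "y = polar \<rho> \<psi>"
    using polar_surj by blast
  define h where "h = pi / real n"
  define K where "K = \<lfloor>(\<psi> - th) / h\<rfloor>"
  define p where "p = th + of_int K * h"
  define d where "d = \<psi> - p"
  have h_bounds: "0 < h" "h < pi"
    using two_le_n by (auto simp: h_def field_simps)
  have "of_int K \<le> (\<psi> - th) / h" "(\<psi> - th) / h < of_int K + 1"
    unfolding K_def by (rule of_int_floor_le, rule real_of_int_floor_add_one_gt)
  hence "of_int K * h \<le> \<psi> - th" "\<psi> - th < (of_int K + 1) * h"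
    using h_bounds by (simp_all add: pos_le_divide_eq pos_divide_less_eq)
  hence d_bounds: "0 \<le> d" "d \<le> h"
    by (simp_all add: d_def p_def algebra_simps)
  have "0 < sin h"
    using h_bounds by (intro sin_gt_zero) auto
  have "th + of_int (K + 1) * (pi / real n) = p + h"
    by (simp only: p_def h_def of_int_add distrib_right)
  hence "vertex K = polar r p" "vertex (K + 1) = polar r (p + h)"
    by (simp_all only: vertex_def p_def h_def)
  moreover have "y = polar \<rho> (p + d)"
    by (simp add: y d_def)
  ultimately have "y = (\<rho> * sin (h - d) / (r * sin h)) *\<^sub>R vertex K + (\<rho> * sin d / (r * sin h)) *\<^sub>R vertex (K + 1)"
    using polar_in_sector[of h r \<rho> p d] \<open>0 < sin h\<close> r_pos by simp
  moreover have "0 \<le> \<rho> * sin (h - d) / (r * sin h)" "0 \<le> \<rho> * sin d / (r * sin h)"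
    using \<open>0 \<le> \<rho>\<close> \<open>0 < sin h\<close> r_pos d_bounds h_bounds
    by (intro divide_nonneg_pos mult_nonneg_nonneg sin_ge_zero mult_pos_pos; simp)+
  ultimately show ?thesis
    by blast
qed

lemma cone_in_scaled_BX:
  assumes "0 \<le> \<alpha>" and "0 \<le> \<beta>" and "0 < t" and "\<alpha> + \<beta> \<le> t"
  shows "\<alpha> *\<^sub>R vertex K + \<beta> *\<^sub>R vertex L \<in> (\<lambda>z. t *\<^sub>R z) ` BX"
proof -
  have "(\<alpha> / t) *\<^sub>R vertex K + (\<beta> / t) *\<^sub>R vertex L + (1 - (\<alpha> + \<beta>) / t) *\<^sub>R 0
      \<in> convex hull {vertex K, vertex L, 0}"
    unfolding convex_hull_3 using assms
    by (intro CollectI exI[of _ "\<alpha> / t"] exI[of _ "\<beta> / t"] exI[of _ "1 - (\<alpha> + \<beta>) / t"])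
      (auto simp: field_simps)
  also have "\<dots> \<subseteq> BX"
    by (intro hull_minimal) (auto simp: vertex_in_BX zero_in_BX convex_BX)
  finally show ?thesis
    using assms(3) by (intro image_eqI[where x = "(\<alpha> / t) *\<^sub>R vertex K + (\<beta> / t) *\<^sub>R vertex L"])
      (auto simp: scaleR_add_right)
qed

lemma absorbing_BX: "\<exists>t>0. y \<in> (\<lambda>z. t *\<^sub>R z) ` BX"
proof -
  obtain K \<alpha> \<beta> where "0 \<le> \<alpha>" "0 \<le> \<beta>" "y = \<alpha> *\<^sub>R vertex K + \<beta> *\<^sub>R vertex (K + 1)"
    using cone_decomposition by blast
  thus ?thesis
    by (intro exI[of _ "\<alpha> + \<beta> + 1"]) (auto intro!: cone_in_scaled_BX)
qed

text \<open>For s = tan half_angle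
  (resp. s = - tan half_angle) it equals 1 on the whole edge from vertex K to vertex (K + 1)
  (resp. vertex (K - 1)), so it norms every point of that edge.\<close>

definition supp_fun :: "int \<Rightarrow> real \<Rightarrow> real^2 \<Rightarrow> real" where
  "supp_fun K s y = (vertex K + s *\<^sub>R tangent K) \<bullet> y / r\<^sup>2"

lemma linear_supp_fun: "linear (supp_fun K s)"
  unfolding supp_fun_def by (rule linearI) (simp_all add: inner_add_right add_divide_distrib)

lemma supp_fun_vertex:
  "supp_fun K s (vertex J) = cos (of_int (J - K) * (pi / real n)) + s * sin (of_int (J - K) * (pi / real n))"
proof -
  define x where "x = of_int (J - K) * (pi / real n)"
  have vertex_angle: "(th + of_int K * (pi / real n)) - (th + of_int J * (pi / real n)) = - x"
    by (simp add: x_def algebra_simps)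
  have vertex_inner: "vertex K \<bullet> vertex J = r\<^sup>2 * cos x"
    unfolding vertex_def inner_polar vertex_angle by (simp add: power2_eq_square)
  have tangent_angle: "(th + of_int K * (pi / real n) + pi / 2) - (th + of_int J * (pi / real n)) = pi / 2 - x"
    by (simp add: x_def algebra_simps)
  have tangent_inner: "tangent K \<bullet> vertex J = r\<^sup>2 * sin x"
    unfolding tangent_def vertex_def inner_polar tangent_angle by (simp add: cos_diff power2_eq_square)
  show ?thesis
    unfolding x_def[symmetric] using r_pos
    by (simp add: supp_fun_def inner_add_left vertex_inner tangent_inner field_simps)
qed

lemma supp_fun_self: "supp_fun K s (vertex K) = 1"
  by (simp add: supp_fun_vertex)

lemma supp_fun_next_vertex: "supp_fun K (tan half_angle) (vertex (K + 1)) = 1"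
proof -
  have "pi / real n = 2 * half_angle"
    by simp
  thus ?thesis
    using cos_half_angle_pos by (simp add: supp_fun_vertex cos_add_tan_mult_sin)
qed

lemma abs_supp_fun_vertex_le:
  assumes "\<bar>s\<bar> = tan half_angle"
  shows "\<bar>supp_fun K s (vertex J)\<bar> \<le> 1"
proof -
  define x where "x = of_int (J - K) * (pi / real n)"
  obtain b q where "s = tan b" "cos b = cos half_angle" "odd q" "x - b = of_int q * half_angle"
  proof (cases "0 \<le> s")
    case True
    have "x - half_angle = of_int (2 * (J - K) - 1) * half_angle"
      using two_le_n by (simp add: x_def field_simps)
    thus ?thesis
      using that[of half_angle "2 * (J - K) - 1"] assms True by simp
  next
    case False
    have "x - - half_angle = of_int (2 * (J - K) + 1) * half_angle"
      using two_le_n by (simp add: x_def field_simps)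
    thus ?thesis
      using that[of "- half_angle" "2 * (J - K) + 1"] assms False by simp
  qed
  note b = this
  have "supp_fun K s (vertex J) = cos x + tan b * sin x"
    unfolding supp_fun_vertex x_def b(1) ..
  also have "\<dots> = cos (x - b) / cos b"
    by (rule cos_add_tan_mult_sin) (use cos_half_angle_pos b(2) in linarith)
  also have "\<dots> = cos (of_int q * half_angle) / cos half_angle"
    by (simp only: b(2,4))
  finally have "\<bar>supp_fun K s (vertex J)\<bar> = \<bar>cos (of_int q * half_angle)\<bar> / cos half_angle"
    using cos_half_angle_pos by simp
  also have "\<dots> \<le> 1"
    using abs_cos_odd_multiple_le[of n q] \<open>odd q\<close> two_le_n cos_half_angle_pos by (simp add: pos_divide_le_eq)
  finally show ?thesis .
qed

lemma supp_fun_le_one_on_BX: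
  assumes "\<bar>s\<bar> = tan half_angle" and "z \<in> BX"
  shows "supp_fun K s z \<le> 1"
  using assms(2) abs_supp_fun_vertex_le[OF assms(1)] unfolding reg_ball_eq_hull
  by (intro linear_le_on_convex_hull[OF linear_supp_fun]) (auto simp: abs_le_iff)

lemma supp_fun_cone:
  "supp_fun K (tan half_angle) (\<alpha> *\<^sub>R vertex K + \<beta> *\<^sub>R vertex (K + 1)) = \<alpha> + \<beta>"
  by (simp add: linear_add[OF linear_supp_fun] linear_cmul[OF linear_supp_fun]
      supp_fun_self supp_fun_next_vertex)

lemma bnorm_cone:
  assumes "0 \<le> \<alpha>" and "0 \<le> \<beta>"
  shows "bnorm BX (\<alpha> *\<^sub>R vertex K + \<beta> *\<^sub>R vertex (K + 1)) = \<alpha> + \<beta>"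
proof (rule antisym)
  show "bnorm BX (\<alpha> *\<^sub>R vertex K + \<beta> *\<^sub>R vertex (K + 1)) \<le> \<alpha> + \<beta>"
  proof (rule field_le_epsilon)
    fix e :: real
    assume "0 < e"
    thus "bnorm BX (\<alpha> *\<^sub>R vertex K + \<beta> *\<^sub>R vertex (K + 1)) \<le> \<alpha> + \<beta> + e"
      using assms by (intro bnorm_le cone_in_scaled_BX) auto
  qed
  have "supp_fun K (tan half_angle) y \<le> bnorm BX y" for y
    using tan_half_angle_pos
    by (intro linear_le_bnorm linear_supp_fun absorbing_BX ballI supp_fun_le_one_on_BX) auto
  thus "\<alpha> + \<beta> \<le> bnorm BX (\<alpha> *\<^sub>R vertex K + \<beta> *\<^sub>R vertex (K + 1))"
    by (metis supp_fun_cone)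
qed

lemma bnorm_vertex: "bnorm BX (vertex K) = 1"
  using bnorm_cone[of 1 0 K] by simp

lemma bnorm_zero: "bnorm BX 0 = 0"
  using bnorm_cone[of 0 0 0] by simp

lemma abs_linear_le_bnorm:
  assumes "linear f" and "\<forall>J. \<bar>f (vertex J)\<bar> \<le> M"
  shows "\<bar>f y\<bar> \<le> M * bnorm BX y"
proof -
  obtain K \<alpha> \<beta> where nonneg: "0 \<le> \<alpha>" "0 \<le> \<beta>" and y: "y = \<alpha> *\<^sub>R vertex K + \<beta> *\<^sub>R vertex (K + 1)"
    using cone_decomposition by blast
  have "\<bar>f y\<bar> = \<bar>\<alpha> * f (vertex K) + \<beta> * f (vertex (K + 1))\<bar>"
    by (simp add: y linear_add[OF assms(1)] linear_cmul[OF assms(1)])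
  also have "\<dots> \<le> \<alpha> * \<bar>f (vertex K)\<bar> + \<beta> * \<bar>f (vertex (K + 1))\<bar>"
    using nonneg by (simp add: abs_mult order_trans[OF abs_triangle_ineq])
  also have "\<dots> \<le> \<alpha> * M + \<beta> * M"
    using nonneg assms(2) by (intro add_mono mult_left_mono) auto
  also have "\<dots> = M * bnorm BX y"
    unfolding y bnorm_cone[OF nonneg] by (simp add: algebra_simps)
  finally show ?thesis .
qed

lemma dnorm_BX_le:
  assumes "linear f" and "\<forall>J. \<bar>f (vertex J)\<bar> \<le> M"
  shows "dnorm BX f \<le> M"
  using assms abs_linear_le_bnorm[OF assms] order_trans[OF abs_ge_zero]
  by (intro dnorm_le[where x = 0]) (auto simp: bnorm_zero)

lemma dnorm_BX_eqI:
  assumes "linear f" and "\<forall>J. \<bar>f (vertex J)\<bar> \<le> M" and "\<bar>f (vertex K)\<bar> = M"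
  shows "dnorm BX f = M"
  using assms abs_linear_le_bnorm[OF assms(1,2)] by (intro dnorm_eqI[where x = "vertex K"]) (auto simp: bnorm_vertex)

lemma abs_vertex_le_dnorm:
  assumes "linear f"
  shows "\<bar>f (vertex J)\<bar> \<le> dnorm BX f"
proof -
  \<comment> \<open>Any common bound on the vertices makes the supremum defining dnorm bounded.\<close>
  define M where "M = \<bar>f (vertex 0)\<bar> + \<bar>f (tangent 0)\<bar>"
  have "\<bar>cos u * a + sin u * b\<bar> \<le> \<bar>a\<bar> + \<bar>b\<bar>" for u a b :: real
    by (rule order_trans[OF abs_triangle_ineq add_mono]) (simp_all add: abs_mult mult_left_le_one_le)
  hence "\<forall>I. \<bar>f (vertex I)\<bar> \<le> M"
    unfolding M_def by (metis linear_vertex_expand[OF assms, where K = 0])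
  thus ?thesis
    using abs_linear_le_bnorm[OF assms] by (intro abs_le_dnorm[where M = M]) (auto simp: M_def bnorm_vertex)
qed

lemma mem_Jset_vertex: "f \<in> Jset BX (vertex K) \<longleftrightarrow> linear f \<and> dnorm BX f = 1 \<and> f (vertex K) = 1"
  by (simp add: Jset_def bnorm_vertex)

lemma supp_fun_in_Jset:
  assumes "\<bar>s\<bar> = tan half_angle"
  shows "supp_fun K s \<in> Jset BX (vertex K)"
  using abs_supp_fun_vertex_le[OF assms]
  by (simp add: mem_Jset_vertex linear_supp_fun supp_fun_self dnorm_BX_eqI[OF linear_supp_fun, where K = K])

lemma abs_tangent_le:
  assumes "f \<in> Jset BX (vertex K)"
  shows "\<bar>f (tangent K)\<bar> \<le> tan half_angle"
proof -
  define S where "S = f (tangent K)"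
  define a where "a = half_angle"
  have f: "linear f" "dnorm BX f = 1" "f (vertex K) = 1"
    using assms by (simp_all add: mem_Jset_vertex)
  have "pi / real n = 2 * a"
    by (simp add: a_def)
  hence "f (vertex (K + 1)) = cos (2 * a) + sin (2 * a) * S"
    and "f (vertex (K - 1)) = cos (2 * a) - sin (2 * a) * S"
    using linear_vertex_expand[OF f(1), of "K + 1" K] linear_vertex_expand[OF f(1), of "K - 1" K] f(3)
    by (simp_all add: S_def)
  moreover have "f (vertex (K + 1)) \<le> 1" "f (vertex (K - 1)) \<le> 1"
    using abs_vertex_le_dnorm[OF f(1)] f(2) by (metis abs_le_iff)+
  ultimately have "sin (2 * a) * \<bar>S\<bar> \<le> 1 - cos (2 * a)"
    by (cases "0 \<le> S") auto
  also have "\<dots> = 2 * sin a * sin a"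
    by (simp add: cos_double_sin power2_eq_square)
  finally have "sin a * (cos a * \<bar>S\<bar>) \<le> sin a * sin a"
    unfolding sin_double by (simp add: mult.assoc)
  moreover have "0 < sin a"
    using half_angle_bounds unfolding a_def by (intro sin_gt_zero) auto
  ultimately have "cos a * \<bar>S\<bar> \<le> sin a"
    by simp
  thus ?thesis
    using cos_half_angle_pos by (simp add: S_def a_def tan_def pos_le_divide_eq mult.commute)
qed

lemma dnorm_diff_le:
  assumes "f \<in> Jset BX (vertex K)" and "g \<in> Jset BX (vertex K)"
  shows "dnorm BX (\<lambda>y. f y - g y) \<le> 2 * tan half_angle * max_abs_sin_multiple n"
proof -
  have f: "linear f" "f (vertex K) = 1" and g: "linear g" "g (vertex K) = 1"
    using assms by (simp_all add: mem_Jset_vertex)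
  have "\<bar>f (vertex J) - g (vertex J)\<bar> \<le> 2 * tan half_angle * max_abs_sin_multiple n" for J
  proof -
    define u where "u = of_int (J - K) * (pi / real n)"
    have "\<bar>f (vertex J) - g (vertex J)\<bar> = \<bar>sin u\<bar> * \<bar>f (tangent K) - g (tangent K)\<bar>"
      using linear_vertex_expand[OF f(1), of J K] linear_vertex_expand[OF g(1), of J K] f(2) g(2)
      unfolding u_def[symmetric] by (simp add: abs_mult[symmetric] algebra_simps)
    also have "\<dots> \<le> max_abs_sin_multiple n * (2 * tan half_angle)"
    proof (rule mult_mono)
      show "\<bar>sin u\<bar> \<le> max_abs_sin_multiple n"
        unfolding u_def using two_le_n by (intro abs_sin_multiple_le_max) auto
      show "\<bar>f (tangent K) - g (tangent K)\<bar> \<le> 2 * tan half_angle"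
        using abs_tangent_le[OF assms(1)] abs_tangent_le[OF assms(2)] by linarith
      show "0 \<le> max_abs_sin_multiple n"
        using abs_sin_multiple_le_max[of n 0] two_le_n by simp
    qed simp
    finally show ?thesis
      by (simp add: algebra_simps)
  qed
  thus ?thesis
    using f(1) g(1) by (intro dnorm_BX_le linear_compose_sub) auto
qed

lemma diamJ_vertex: "diamJ BX (vertex K) = 2 * tan half_angle * max_abs_sin_multiple n"
proof (rule diamJ_eqI)
  let ?f = "supp_fun K (tan half_angle)" and ?g = "supp_fun K (- tan half_angle)"
  show "?f \<in> Jset BX (vertex K)" "?g \<in> Jset BX (vertex K)"
    using tan_half_angle_pos by (simp_all add: supp_fun_in_Jset)
  have "1 \<le> n"
    using two_le_n by simp
  then obtain m where m: "\<bar>sin (of_int m * (pi / real n))\<bar> = max_abs_sin_multiple n"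
    by (rule max_abs_sin_multiple_attained)
  have diff: "\<bar>?f (vertex J) - ?g (vertex J)\<bar> = 2 * tan half_angle * \<bar>sin (of_int (J - K) * (pi / real n))\<bar>" for J
    using tan_half_angle_pos by (simp add: supp_fun_vertex abs_mult)
  show "dnorm BX (\<lambda>y. ?f y - ?g y) = 2 * tan half_angle * max_abs_sin_multiple n"
  proof (rule dnorm_BX_eqI[where K = "K + m"])
    show "linear (\<lambda>y. ?f y - ?g y)"
      by (intro linear_compose_sub linear_supp_fun)
    show "\<forall>J. \<bar>?f (vertex J) - ?g (vertex J)\<bar> \<le> 2 * tan half_angle * max_abs_sin_multiple n"
    proof
      fix J
      show "\<bar>?f (vertex J) - ?g (vertex J)\<bar> \<le> 2 * tan half_angle * max_abs_sin_multiple n"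
        unfolding diff using tan_half_angle_pos abs_sin_multiple_le_max[OF \<open>1 \<le> n\<close>, of "J - K"]
        by (intro mult_left_mono) auto
    qed
    show "\<bar>?f (vertex (K + m)) - ?g (vertex (K + m))\<bar> = 2 * tan half_angle * max_abs_sin_multiple n"
      unfolding diff using m by simp
  qed
qed (use dnorm_diff_le in blast)

lemma Jset_subset_vertex:
  assumes "0 < \<alpha>" and "0 \<le> \<beta>" and "bnorm BX (\<alpha> *\<^sub>R vertex K + \<beta> *\<^sub>R vertex L) = \<alpha> + \<beta>"
  shows "Jset BX (\<alpha> *\<^sub>R vertex K + \<beta> *\<^sub>R vertex L) \<subseteq> Jset BX (vertex K)"
proof
  fix f
  assume "f \<in> Jset BX (\<alpha> *\<^sub>R vertex K + \<beta> *\<^sub>R vertex L)"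
  hence f: "linear f" "dnorm BX f = 1" and "f (\<alpha> *\<^sub>R vertex K + \<beta> *\<^sub>R vertex L) = \<alpha> + \<beta>"
    using assms(3) by (simp_all add: Jset_def)
  hence "\<alpha> * (1 - f (vertex K)) + \<beta> * (1 - f (vertex L)) = 0"
    by (simp add: linear_add[OF f(1)] linear_cmul[OF f(1)] algebra_simps)
  moreover have "f (vertex K) \<le> 1" "f (vertex L) \<le> 1"
    using abs_vertex_le_dnorm[OF f(1)] f(2) by (metis abs_le_iff)+
  hence "0 \<le> \<alpha> * (1 - f (vertex K))" "0 \<le> \<beta> * (1 - f (vertex L))"
    using assms(1,2) by simp_all
  ultimately have "\<alpha> * (1 - f (vertex K)) = 0"
    by linarith
  thus "f \<in> Jset BX (vertex K)"
    using assms(1) f by (simp add: mem_Jset_vertex)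
qed

lemma supp_fun_in_Jset_cone:
  assumes "0 \<le> \<alpha>" and "0 \<le> \<beta>"
  shows "supp_fun K (tan half_angle) \<in> Jset BX (\<alpha> *\<^sub>R vertex K + \<beta> *\<^sub>R vertex (K + 1))"
  using supp_fun_in_Jset[of "tan half_angle" K] tan_half_angle_pos
  by (simp add: Jset_def mem_Jset_vertex bnorm_cone[OF assms] supp_fun_cone)

lemma diamJ_le_on_sphere:
  assumes "bnorm BX y = 1"
  shows "diamJ BX y \<le> 2 * tan half_angle * max_abs_sin_multiple n"
proof -
  obtain K \<alpha> \<beta> where nonneg: "0 \<le> \<alpha>" "0 \<le> \<beta>" and y: "y = \<alpha> *\<^sub>R vertex K + \<beta> *\<^sub>R vertex (K + 1)"
    using cone_decomposition by blast
  have "\<alpha> + \<beta> = 1"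
    using assms bnorm_cone[OF nonneg] by (simp add: y)
  obtain L where "Jset BX y \<subseteq> Jset BX (vertex L)"
  proof (cases "0 < \<alpha>")
    case True
    thus ?thesis
      using that Jset_subset_vertex[of \<alpha> \<beta> K "K + 1"] nonneg bnorm_cone[OF nonneg] y by simp
  next
    case False
    hence "0 < \<beta>" "y = \<beta> *\<^sub>R vertex (K + 1) + \<alpha> *\<^sub>R vertex K"
      using \<open>\<alpha> + \<beta> = 1\<close> nonneg by (simp_all add: y add.commute)
    thus ?thesis
      using that Jset_subset_vertex[of \<beta> \<alpha> "K + 1" K] nonneg assms \<open>\<alpha> + \<beta> = 1\<close> by (simp add: add.commute)
  qed
  moreover have "Jset BX y \<noteq> {}"
    using supp_fun_in_Jset_cone[OF nonneg] y by blast
  ultimately show ?thesis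
    by (intro diamJ_le) (auto intro: dnorm_diff_le)
qed

lemma calE_BX: "calE BX = 2 * tan half_angle * max_abs_sin_multiple n"
  unfolding calE_def
proof (rule cSup_eq_maximum)
  show "2 * tan half_angle * max_abs_sin_multiple n \<in> {diamJ BX x |x. bnorm BX x = 1}"
    by (intro CollectI exI[of _ "vertex 0"]) (simp add: diamJ_vertex bnorm_vertex)
qed (use diamJ_le_on_sphere in auto)

lemma extreme_point_BX_vertex:
  assumes "x extreme_point_of BX"
  obtains K where "x = vertex K"
  using extreme_point_of_convex_hull[of x "range vertex"] assms by (auto simp: reg_ball_eq_hull)

end

theorem theorem5p1:
  fixes n :: nat and r th :: real and x :: "real^2"
  assumes "n \<ge> 2" and "r > 0"
    and "x extreme_point_of (reg_ball n r th)"
  shows "diamJ (reg_ball n r th) x = calE (reg_ball n r th)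
    \<and> calE (reg_ball n r th) =
       (if even n then 2 * tan (pi / (2 * real n))
        else 2 * tan (pi / (2 * real n)) * sin ((real n - 1) * pi / (2 * real n)))"
proof -
  interpret regular_polygon n r th
    using assms(1,2) by unfold_locales
  obtain K where "x = vertex K"
    using extreme_point_BX_vertex[OF assms(3)] .
  thus ?thesis
    by (simp add: diamJ_vertex calE_BX max_abs_sin_multiple_def)
qed

end
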